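(* Let $m\ge1$ and let $\Psi_m(X)=\det(x_{ij})_{1\le i,j\le m}$, viewed as a polynomial in the $m^2$ variables $x_{11},\ldots,x_{mm}$ (i.e. a polynomial on $\mathbb{R}^{m^2}$). Then $\Psi_m$ is an irreducible homogeneous polynomial of degree $m$ which is an eigenfunction of $L$, i.e. $L(\Psi_m)$ is divisible by $\Psi_m$ in $\mathbb{R}[x_{11},\ldots,x_{mm}]$.
   Context: For a polynomial $f$ on $\mathbb{R}^n$ in variables $x_1,\ldots,x_n$, $L(f):=|\nabla f|^2\Delta f-\sum_{i,j=1}^n f_{x_i}f_{x_j}f_{x_ix_j}$. A homogeneous polynomial $f$ is called an eigenfunction of $L$ if $L(f)\equiv 0 \bmod f$, i.e. $L(f)=\lambda f$ for some polynomial $\lambda$. *)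

theory Defs
  imports "HOL-Analysis.Analysis" "HOL-Library.Poly_Mapping" "HOL-Computational_Algebra.Factorial_Ring"
begin

type_synonym 'v rpoly = "('v \<Rightarrow>\<^sub>0 nat) \<Rightarrow>\<^sub>0 real"

definition Var :: "'v \<Rightarrow> 'v rpoly" where
  "Var v = Poly_Mapping.single (Poly_Mapping.single v 1) 1"

definition pdiff :: "'v \<Rightarrow> 'v rpoly \<Rightarrow> 'v rpoly" where
  "pdiff v p = (\<Sum>mon\<in>Poly_Mapping.keys p.
      Poly_Mapping.single (mon - Poly_Mapping.single v 1)
        (of_nat (Poly_Mapping.lookup mon v) * Poly_Mapping.lookup p mon))"

definition mdeg :: "('v::finite \<Rightarrow>\<^sub>0 nat) \<Rightarrow> nat" where
  "mdeg mon = (\<Sum>v\<in>UNIV. Poly_Mapping.lookup mon v)"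

definition homogeneous_of_degree :: "nat \<Rightarrow> 'v::finite rpoly \<Rightarrow> bool" where
  "homogeneous_of_degree d p \<longleftrightarrow> p \<noteq> 0 \<and> (\<forall>mon\<in>Poly_Mapping.keys p. mdeg mon = d)"

definition Lop :: "'v::finite rpoly \<Rightarrow> 'v rpoly" where
  "Lop f = (\<Sum>i\<in>UNIV. pdiff i f ^ 2) * (\<Sum>i\<in>UNIV. pdiff i (pdiff i f))
         - (\<Sum>i\<in>UNIV. \<Sum>j\<in>UNIV. pdiff i f * pdiff j f * pdiff j (pdiff i f))"

text \<open>The determinant polynomial Psi_m in the m^2 variables x_ij, i,j in 'n, m = CARD('n).\<close>
definition Psi :: "('n::finite \<times> 'n) rpoly" where
  "Psi = det ((\<chi> i j. Var (i, j)) :: (('n \<times> 'n) rpoly)^'n^'n)"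

end

theory Submission
  imports Defs
begin

text \<open>Write \<open>\<Psi>\<^sub>a\<^sub>b\<close> for \<open>\<partial>\<Psi>/\<partial>x\<^sub>a\<^sub>b\<close>, a cofactor of the generic matrix \<open>X = (x\<^sub>i\<^sub>j)\<close>.
  Since \<open>\<Psi>\<close> is linear in every row, \<open>\<Delta>\<Psi> = 0\<close>, so \<open>L(\<Psi>) = -H\<close> with
  \<open>H = \<Sigma> \<Psi>\<^sub>a\<^sub>b \<Psi>\<^sub>c\<^sub>d \<Psi>\<^sub>a\<^sub>b\<^sub>,\<^sub>c\<^sub>d\<close>. The Desnanot--Jacobi identity
  \<open>\<Psi>\<^sub>a\<^sub>b \<Psi>\<^sub>c\<^sub>d - \<Psi>\<^sub>a\<^sub>d \<Psi>\<^sub>c\<^sub>b = \<Psi> \<Psi>\<^sub>a\<^sub>b\<^sub>,\<^sub>c\<^sub>d\<close> and the antisymmetry of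
  \<open>\<Psi>\<^sub>a\<^sub>b\<^sub>,\<^sub>c\<^sub>d\<close> under exchanging \<open>b\<close> and \<open>d\<close> then give \<open>2H = \<Psi> \<Sigma> \<Psi>\<^sub>a\<^sub>b\<^sub>,\<^sub>c\<^sub>d\<^sup>2\<close>.

  For irreducibility, \<open>\<Psi>\<close> has degree one in each variable and also in each row and each column
  of variables. In a factorisation \<open>\<Psi> = f g\<close> degrees in a set of variables add up, so every
  variable lies in exactly one factor, and variables in a common row or column lie in the same
  factor. Hence one factor contains all variables and the other is a nonzero constant.\<close>

section \<open>Formal partial derivatives\<close>

lemma poly_mapping_sum_single:
  "p = (\<Sum>a\<in>Poly_Mapping.keys p. Poly_Mapping.single a (Poly_Mapping.lookup p a))"
proof (rule poly_mapping_eqI)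
  fix k
  show "Poly_Mapping.lookup p k =
    Poly_Mapping.lookup (\<Sum>a\<in>Poly_Mapping.keys p. Poly_Mapping.single a (Poly_Mapping.lookup p a)) k"
    unfolding lookup_sum lookup_single
    by (cases "k \<in> Poly_Mapping.keys p") (auto simp: when_def in_keys_iff)
qed

lemma pdiff_sum_superset:
  assumes "finite S" "Poly_Mapping.keys p \<subseteq> S"
  shows "pdiff v p = (\<Sum>mon\<in>S. Poly_Mapping.single (mon - Poly_Mapping.single v 1)
        (of_nat (Poly_Mapping.lookup mon v) * Poly_Mapping.lookup p mon))"
  unfolding pdiff_def
  by (rule sum.mono_neutral_left) (use assms in \<open>auto simp: in_keys_iff\<close>)

lemma pdiff_zero [simp]: "pdiff v 0 = 0"
  by (simp add: pdiff_def)

lemma pdiff_add: "pdiff v (p + q) = pdiff v p + pdiff v q"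
proof -
  let ?S = "Poly_Mapping.keys p \<union> Poly_Mapping.keys q"
  have S: "finite ?S" "Poly_Mapping.keys p \<subseteq> ?S" "Poly_Mapping.keys q \<subseteq> ?S"
    "Poly_Mapping.keys (p + q) \<subseteq> ?S"
    by (auto simp: keys_add)
  show ?thesis
    unfolding pdiff_sum_superset[OF S(1,2)] pdiff_sum_superset[OF S(1,3)] pdiff_sum_superset[OF S(1,4)]
    by (simp only: lookup_add distrib_left single_add sum.distrib)
qed

lemma pdiff_sum: "pdiff v (sum f A) = (\<Sum>a\<in>A. pdiff v (f a))"
  by (induction A rule: infinite_finite_induct) (auto simp: pdiff_add)

lemma pdiff_single:
  "pdiff v (Poly_Mapping.single mon c) =
   Poly_Mapping.single (mon - Poly_Mapping.single v 1) (of_nat (Poly_Mapping.lookup mon v) * c)"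
  by (subst pdiff_sum_superset[of "{mon}"]) auto

lemma pdiff_mult_single:
  "pdiff v (Poly_Mapping.single a c * Poly_Mapping.single b d) =
   pdiff v (Poly_Mapping.single a c) * Poly_Mapping.single b d
   + Poly_Mapping.single a c * pdiff v (Poly_Mapping.single b d)"
proof -
  let ?e = "Poly_Mapping.single v (1::nat)"
  have shift: "a - ?e + b = a + b - ?e" "b + (a - ?e) = b + a - ?e"
    if "0 < Poly_Mapping.lookup a v" for a b :: "'a \<Rightarrow>\<^sub>0 nat"
    using that by (auto intro!: poly_mapping_eqI simp: lookup_add lookup_minus lookup_single when_def)
  have left: "pdiff v (Poly_Mapping.single a c) * Poly_Mapping.single b d =
     Poly_Mapping.single (a + b - ?e) (of_nat (Poly_Mapping.lookup a v) * c * d)"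
    by (cases "Poly_Mapping.lookup a v = 0")
      (simp_all add: pdiff_single mult_single shift[unfolded One_nat_def])
  have right: "Poly_Mapping.single a c * pdiff v (Poly_Mapping.single b d) =
     Poly_Mapping.single (a + b - ?e) (of_nat (Poly_Mapping.lookup b v) * c * d)"
    by (cases "Poly_Mapping.lookup b v = 0")
      (simp_all add: pdiff_single mult_single shift[unfolded One_nat_def] mult_ac)
  have "pdiff v (Poly_Mapping.single a c * Poly_Mapping.single b d) =
     Poly_Mapping.single (a + b - ?e) (of_nat (Poly_Mapping.lookup a v) * c * d)
     + Poly_Mapping.single (a + b - ?e) (of_nat (Poly_Mapping.lookup b v) * c * d)"
    by (simp add: mult_single pdiff_single lookup_add algebra_simps flip: single_add)
  then show ?thesis
    unfolding left right .
qed

lemma pdiff_mult: "pdiff v (p * q) = pdiff v p * q + p * pdiff v q"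
proof -
  let ?P = "\<lambda>a. Poly_Mapping.single a (Poly_Mapping.lookup p a)"
  let ?Q = "\<lambda>b. Poly_Mapping.single b (Poly_Mapping.lookup q b)"
  have "pdiff v ((\<Sum>a\<in>Poly_Mapping.keys p. ?P a) * (\<Sum>b\<in>Poly_Mapping.keys q. ?Q b)) =
    pdiff v (\<Sum>a\<in>Poly_Mapping.keys p. ?P a) * (\<Sum>b\<in>Poly_Mapping.keys q. ?Q b)
    + (\<Sum>a\<in>Poly_Mapping.keys p. ?P a) * pdiff v (\<Sum>b\<in>Poly_Mapping.keys q. ?Q b)"
    unfolding sum_product pdiff_sum pdiff_mult_single sum_distrib_left sum_distrib_right
    by (simp only: sum.distrib)
  then show ?thesis
    by (simp only: poly_mapping_sum_single[symmetric])
qed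

lemma pdiff_const [simp]: "pdiff v (Poly_Mapping.single 0 c) = 0"
  by (simp add: pdiff_single)

lemma pdiff_one [simp]: "pdiff v 1 = 0"
  by (metis pdiff_const single_one)

lemma pdiff_of_int [simp]: "pdiff v (of_int k) = 0"
  by (metis pdiff_const single_of_int)

lemma pdiff_Var: "pdiff v (Var w) = (if v = w then 1 else 0)"
  by (auto simp: Var_def pdiff_single lookup_single_not_eq)

lemma pdiff_prod: "pdiff v (\<Prod>i\<in>A. f i) = (\<Sum>i\<in>A. pdiff v (f i) * (\<Prod>j\<in>A - {i}. f j))"
proof (induction A rule: infinite_finite_induct)
  case (insert x F)
  have "prod f (insert x F - {i}) = f x * prod f (F - {i})" if "i \<in> F" for i
  proof -
    have "insert x F - {i} = insert x (F - {i})" "x \<notin> F - {i}"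
      using that insert.hyps by auto
    then show ?thesis using insert.hyps(1) by simp
  qed
  then have "(\<Sum>i\<in>F. pdiff v (f i) * prod f (insert x F - {i})) =
      f x * (\<Sum>i\<in>F. pdiff v (f i) * prod f (F - {i}))"
    by (simp add: sum_distrib_left mult.left_commute cong: sum.cong)
  then show ?case
    using insert by (simp add: pdiff_mult)
qed auto

section \<open>Row replacement and cofactors\<close>

definition replace_row :: "'a^'n^'m \<Rightarrow> 'm \<Rightarrow> 'a^'n \<Rightarrow> 'a^'n^'m" where
  "replace_row A a r = (\<chi> i. if i = a then r else A$i)"

lemma replace_row_nth [simp]: "replace_row A a r $ i = (if i = a then r else A$i)"
  by (simp add: replace_row_def)

lemma replace_row_self [simp]: "replace_row A a (A$a) = A"
  by (simp add: vec_eq_iff)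

lemma det_replace_row_0: "det (replace_row (A::'a::comm_ring_1^'n::finite^'n) a 0) = 0"
  using det_row_0[of a "\<lambda>i. A$i"] by (simp add: replace_row_def)

lemma det_replace_row_identical:
  "a \<noteq> k \<Longrightarrow> det (replace_row (A::'a::comm_ring_1^'n::finite^'n) a (A$k)) = 0"
  by (rule det_identical_rows[of a k]) (auto simp: row_def vec_eq_iff)

lemma det_replace_row_linear:
  fixes A :: "'a::comm_ring_1^'n::finite^'n"
  shows "det (replace_row A a r) = (\<Sum>j\<in>UNIV. r$j * det (replace_row A a (axis j 1)))"
proof -
  have r: "r = (\<Sum>j\<in>UNIV. r$j *s axis j 1)"
    by (simp add: vec_eq_iff sum_component axis_def if_distrib cong: if_cong)
  have "det (replace_row A a r) = det (\<chi> i. if i = a then (\<Sum>j\<in>UNIV. r$j *s axis j 1) else A$i)"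
    by (subst r) (simp add: replace_row_def)
  also have "\<dots> = (\<Sum>j\<in>UNIV. r$j * det (replace_row A a (axis j 1)))"
    by (simp add: det_linear_row_sum det_row_mul replace_row_def)
  finally show ?thesis .
qed

lemma det_replace_row_swap:
  fixes A :: "'a::comm_ring_1^'n::finite^'n"
  assumes "a \<noteq> c"
  shows "det (replace_row (replace_row A a r) c s) = - det (replace_row (replace_row A a s) c r)"
proof -
  let ?t = "Transposition.transpose a c"
  have "(\<chi> i. replace_row (replace_row A a s) c r $ ?t i) = replace_row (replace_row A a r) c s"
    using assms by (auto simp: vec_eq_iff Transposition.transpose_def)
  moreover have "det (\<chi> i. replace_row (replace_row A a s) c r $ ?t i) =
      of_int (sign ?t) * det (replace_row (replace_row A a s) c r)"
    by (rule det_permute_rows) (simp add: permutes_swap_id)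
  ultimately show ?thesis
    using assms by (simp add: sign_swap_id)
qed

text \<open>\<open>cofactor A i j\<close> is the signed minor \<open>(-1)^(i+j) M\<^sub>i\<^sub>j\<close>, and \<open>cofactor2\<close> the analogous
  signed minor obtained by deleting two rows and two columns.\<close>

definition cofactor :: "'a::comm_ring_1^'n^'n \<Rightarrow> 'n \<Rightarrow> 'n \<Rightarrow> 'a" where
  "cofactor A i j = det (replace_row A i (axis j 1))"

definition cofactor2 :: "'a::comm_ring_1^'n^'n \<Rightarrow> 'n \<Rightarrow> 'n \<Rightarrow> 'n \<Rightarrow> 'n \<Rightarrow> 'a" where
  "cofactor2 A a b c d = det (replace_row (replace_row A a (axis b 1)) c (axis d 1))"

lemma cofactor2_swap_columns:
  "a \<noteq> c \<Longrightarrow> cofactor2 (A::'a::comm_ring_1^'n::finite^'n) a d c b = - cofactor2 A a b c d"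
  unfolding cofactor2_def by (rule det_replace_row_swap)

lemma row_expansion_cofactor2:
  fixes A :: "'a::comm_ring_1^'n::finite^'n"
  assumes "a \<noteq> c"
  shows "(\<Sum>j\<in>UNIV. A$k$j * cofactor2 A a b c j) =
    (if k = c then cofactor A a b else if k = a then - cofactor A c b else 0)"
proof -
  let ?M = "replace_row A a (axis b 1)"
  have "(\<Sum>j\<in>UNIV. A$k$j * cofactor2 A a b c j) = det (replace_row ?M c (A$k))"
    unfolding cofactor2_def by (rule det_replace_row_linear[symmetric])
  also have "\<dots> = (if k = c then cofactor A a b else if k = a then - cofactor A c b else 0)"
  proof -
    consider "k = c" | "k = a" | "k \<noteq> c" "k \<noteq> a" by blast
    then show ?thesis
    proof cases
      case 1
      then have "replace_row ?M c (A$k) = ?M" using assms by (simp add: vec_eq_iff)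
      then show ?thesis using 1 by (simp add: cofactor_def)
    next
      case 2
      then show ?thesis
        using assms det_replace_row_swap[of a c A "A$a" "axis b 1"] by (simp add: cofactor_def)
    next
      case 3
      then have "det (replace_row ?M c (?M$k)) = 0" by (intro det_replace_row_identical) simp
      then show ?thesis using 3 by simp
    qed
  qed
  finally show ?thesis .
qed

lemma pdiff_det:
  fixes M :: "('v rpoly)^'n::finite^'n"
  shows "pdiff v (det M) = (\<Sum>i\<in>UNIV. det (replace_row M i (\<chi> j. pdiff v (M$i$j))))"
proof -
  let ?D = "\<lambda>i. replace_row M i (\<chi> j. pdiff v (M$i$j))"
  have "(\<Prod>j\<in>UNIV. ?D i $ j $ p j) = pdiff v (M$i$p i) * (\<Prod>j\<in>UNIV - {i}. M$j$p j)" for p i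
    by (subst prod.remove[of _ i]) (auto intro!: prod.cong)
  then have "pdiff v (det M) = (\<Sum>p\<in>{p. p permutes (UNIV::'n set)}. \<Sum>i\<in>UNIV.
      of_int (sign p) * (\<Prod>j\<in>UNIV. ?D i $ j $ p j))"
    unfolding det_def pdiff_sum pdiff_mult pdiff_prod by (simp add: sum_distrib_left)
  also have "\<dots> = (\<Sum>i\<in>UNIV. det (?D i))"
    unfolding det_def by (rule sum.swap)
  finally show ?thesis .
qed

lemma pdiff_det_var_matrix:
  fixes \<phi> :: "'n::finite \<Rightarrow> 'n \<Rightarrow> 'v"
  assumes "\<And>i j k l. \<phi> i j = \<phi> k l \<longleftrightarrow> i = k \<and> j = l"
  shows "pdiff (\<phi> a b) (det ((\<chi> i j. Var (\<phi> i j)) :: ('v rpoly)^'n^'n)) =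
     cofactor (\<chi> i j. Var (\<phi> i j)) a b"
proof -
  let ?M = "(\<chi> i j. Var (\<phi> i j)) :: ('v rpoly)^'n^'n"
  have row: "(\<chi> j. pdiff (\<phi> a b) (?M$i$j)) = (if i = a then axis b 1 else 0)" for i
    by (auto simp: vec_eq_iff pdiff_Var assms axis_def)
  have "pdiff (\<phi> a b) (det ?M) = (\<Sum>i\<in>UNIV. if i = a then cofactor ?M a b else 0)"
    unfolding pdiff_det row cofactor_def by (intro sum.cong refl) (auto simp: det_replace_row_0)
  then show ?thesis by simp
qed

definition var_matrix :: "(('n::finite \<times> 'n) rpoly)^'n^'n" where
  "var_matrix = (\<chi> i j. Var (i, j))"

lemma pdiff_Psi: "pdiff (a, b) Psi = cofactor var_matrix a b"
  using pdiff_det_var_matrix[of Pair a b] by (simp add: Psi_def var_matrix_def)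

text \<open>Differentiating \<open>det X = det X\<^sup>T\<close> for the generic matrix \<open>X\<close> in both forms identifies
  the cofactors of \<open>X\<^sup>T\<close> with those of \<open>X\<close>.\<close>

lemma cofactor_transpose_var_matrix:
  "cofactor (Finite_Cartesian_Product.transpose var_matrix) b a = cofactor var_matrix a b"
proof -
  have T: "Finite_Cartesian_Product.transpose var_matrix = (\<chi> i j. Var (j, i))"
    by (simp add: var_matrix_def Finite_Cartesian_Product.transpose_def)
  have "pdiff (a, b) (det (Finite_Cartesian_Product.transpose var_matrix)) =
      cofactor (Finite_Cartesian_Product.transpose var_matrix) b a"
    unfolding T using pdiff_det_var_matrix[of "\<lambda>i j. (j, i)" b a] by auto
  then show ?thesis
    using pdiff_Psi[of a b] by (simp add: Psi_def var_matrix_def)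
qed

lemma pdiff_cofactor_var_matrix:
  fixes a b c d :: "'n::finite"
  shows "pdiff (c, d) (cofactor var_matrix a b) = (if c = a then 0 else cofactor2 var_matrix a b c d)"
proof -
  let ?M = "replace_row var_matrix a (axis b 1) :: (('n \<times> 'n) rpoly)^'n^'n"
  have row: "(\<chi> j. pdiff (c, d) (?M$i$j)) = (if i = a then 0 else if i = c then axis d 1 else 0)" for i
    by (auto simp: vec_eq_iff pdiff_Var var_matrix_def axis_def)
  have "pdiff (c, d) (det ?M) = (\<Sum>i\<in>UNIV. if i = c \<and> c \<noteq> a then cofactor2 var_matrix a b c d else 0)"
    unfolding pdiff_det row cofactor2_def by (intro sum.cong refl) (auto simp: det_replace_row_0)
  then show ?thesis
    by (simp add: cofactor_def)
qed

lemma column_expansion_cofactor_var_matrix: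
  fixes j l :: "'n::finite"
  shows "(\<Sum>k\<in>UNIV. cofactor var_matrix k l * var_matrix$k$j) = (if j = l then Psi else 0)"
proof -
  let ?T = "Finite_Cartesian_Product.transpose var_matrix :: (('n \<times> 'n) rpoly)^'n^'n"
  have "?T$j$k * cofactor ?T l k = cofactor var_matrix k l * var_matrix$k$j" for k
    unfolding cofactor_transpose_var_matrix by (simp add: Finite_Cartesian_Product.transpose_def)
  then have "(\<Sum>k\<in>UNIV. cofactor var_matrix k l * var_matrix$k$j) =
      (\<Sum>k\<in>UNIV. ?T$j$k * cofactor ?T l k)"
    by simp
  also have "\<dots> = det (replace_row ?T l (?T$j))"
    unfolding cofactor_def by (rule det_replace_row_linear[symmetric])
  also have "\<dots> = (if j = l then Psi else 0)"
    by (auto simp: Psi_def var_matrix_def det_replace_row_identical)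
  finally show ?thesis .
qed

text \<open>A Desnanot--Jacobi identity: the \<open>2\<times>2\<close> minors of the adjugate are \<open>det X\<close> times the
  complementary minors. Both sides arise by summing
  \<open>cofactor X k d * X$k$j * cofactor2 X a b c j\<close> over \<open>j\<close> first or over \<open>k\<close> first.\<close>

lemma desnanot_jacobi_var_matrix:
  assumes "a \<noteq> c"
  shows "Psi * cofactor2 var_matrix a b c d =
    cofactor var_matrix c d * cofactor var_matrix a b - cofactor var_matrix a d * cofactor var_matrix c b"
proof -
  let ?F = "cofactor var_matrix" and ?K = "cofactor2 var_matrix"
  have "(\<Sum>j\<in>UNIV. ?F k d * var_matrix$k$j * ?K a b c j) =
      ?F k d * (\<Sum>j\<in>UNIV. var_matrix$k$j * ?K a b c j)" for k
    by (simp add: sum_distrib_left mult.assoc)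
  then have "(\<Sum>k\<in>UNIV. \<Sum>j\<in>UNIV. ?F k d * var_matrix$k$j * ?K a b c j) =
      (\<Sum>k\<in>UNIV. ?F k d * (if k = c then ?F a b else if k = a then - ?F c b else 0))"
    by (simp only: row_expansion_cofactor2[OF assms])
  also have "\<dots> = ?F c d * ?F a b - ?F a d * ?F c b"
    using assms by (simp add: if_distrib sum.If_cases)
  finally have rows: "(\<Sum>k\<in>UNIV. \<Sum>j\<in>UNIV. ?F k d * var_matrix$k$j * ?K a b c j) =
      ?F c d * ?F a b - ?F a d * ?F c b" .
  have "(\<Sum>k\<in>UNIV. \<Sum>j\<in>UNIV. ?F k d * var_matrix$k$j * ?K a b c j) =
      (\<Sum>j\<in>UNIV. (\<Sum>k\<in>UNIV. ?F k d * var_matrix$k$j) * ?K a b c j)"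
    by (subst sum.swap) (simp add: sum_distrib_right)
  also have "\<dots> = Psi * ?K a b c d"
    by (simp add: column_expansion_cofactor_var_matrix if_distrib[where f="\<lambda>x. x * _"] cong: if_cong)
  finally show ?thesis
    using rows by simp
qed

section \<open>\<open>\<Psi>\<close> is an eigenfunction of \<open>L\<close>\<close>

lemma pdiff2_Psi:
  "pdiff (c, d) (pdiff (a, b) Psi) = (if c = a then 0 else cofactor2 var_matrix a b c d)"
  by (simp add: pdiff_Psi pdiff_cofactor_var_matrix)

lemma laplacian_Psi: "(\<Sum>i\<in>UNIV. pdiff i (pdiff i (Psi :: ('n::finite \<times> 'n) rpoly))) = 0"
proof (rule sum.neutral, clarify)
  fix a b :: 'n
  show "pdiff (a, b) (pdiff (a, b) Psi) = 0"
    by (simp add: pdiff2_Psi)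
qed

lemma pdiff2_Psi_exchange: "pdiff (c, b) (pdiff (a, d) Psi) = - pdiff (c, d) (pdiff (a, b) Psi)"
  using cofactor2_swap_columns[of a c var_matrix d b] by (simp add: pdiff2_Psi)

lemma pdiff_Psi_mult_pdiff_Psi:
  "pdiff (a, b) Psi * pdiff (c, d) Psi =
    Psi * pdiff (c, d) (pdiff (a, b) Psi) + pdiff (a, d) Psi * pdiff (c, b) Psi"
proof (cases "c = a")
  case False
  then show ?thesis
    using desnanot_jacobi_var_matrix[of a c b d]
    by (simp add: pdiff_Psi pdiff_cofactor_var_matrix algebra_simps)
qed (simp add: pdiff2_Psi mult.commute)

lemma single_0_dvd_1:
  fixes c :: "'a::field"
  assumes "c \<noteq> 0"
  shows "(Poly_Mapping.single 0 c :: ('v \<Rightarrow>\<^sub>0 nat) \<Rightarrow>\<^sub>0 'a) dvd 1"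
proof (rule dvdI)
  show "1 = Poly_Mapping.single 0 c * Poly_Mapping.single 0 (inverse c)"
    using assms by (simp add: mult_single)
qed

lemma sum_mult_antisymmetric_involution:
  fixes f g :: "'a::finite \<Rightarrow> 'b::comm_ring_1"
  assumes e: "\<And>p. e (e p) = p"
    and g: "\<And>p. g (e p) = - g p"
    and f: "\<And>p. f p = c * g p + f (e p)"
  shows "2 * (\<Sum>p\<in>UNIV. f p * g p) = c * (\<Sum>p\<in>UNIV. g p * g p)"
proof -
  have "(\<Sum>p\<in>UNIV. f (e p) * g p) = (\<Sum>p\<in>UNIV. f p * g (e p))"
    by (rule sum.reindex_bij_witness[of _ e e]) (simp_all add: e)
  also have "\<dots> = - (\<Sum>p\<in>UNIV. f p * g p)"
    by (simp add: g sum_negf)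
  finally have "(\<Sum>p\<in>UNIV. f p * g p) = c * (\<Sum>p\<in>UNIV. g p * g p) - (\<Sum>p\<in>UNIV. f p * g p)"
    by (subst (1) f) (simp add: distrib_right sum.distrib sum_distrib_left mult.assoc)
  then show ?thesis
    by (simp add: algebra_simps)
qed

lemma Psi_dvd_Lop_Psi: "(Psi :: ('n::finite \<times> 'n) rpoly) dvd Lop Psi"
proof -
  define F :: "('n \<times> 'n) \<times> ('n \<times> 'n) \<Rightarrow> ('n \<times> 'n) rpoly"
    where "F p = pdiff (fst p) Psi * pdiff (snd p) Psi" for p
  define G :: "('n \<times> 'n) \<times> ('n \<times> 'n) \<Rightarrow> ('n \<times> 'n) rpoly"
    where "G p = pdiff (snd p) (pdiff (fst p) Psi)" for p
  define ex :: "('n \<times> 'n) \<times> ('n \<times> 'n) \<Rightarrow> ('n \<times> 'n) \<times> ('n \<times> 'n)"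
    where "ex p = ((fst (fst p), snd (snd p)), (fst (snd p), snd (fst p)))" for p
  define H where "H = (\<Sum>p\<in>UNIV. F p * G p)"
  have two_H: "2 * H = Psi * (\<Sum>p\<in>UNIV. G p * G p)"
    unfolding H_def
  proof (rule sum_mult_antisymmetric_involution)
    show "ex (ex p) = p" for p
      by (simp add: ex_def)
    show "G (ex p) = - G p" for p
      using pdiff2_Psi_exchange[of "fst (snd p)" "snd (fst p)" "fst (fst p)" "snd (snd p)"]
      by (simp add: G_def ex_def)
    show "F p = Psi * G p + F (ex p)" for p
      using pdiff_Psi_mult_pdiff_Psi[of "fst (fst p)" "snd (fst p)" "fst (snd p)" "snd (snd p)"]
      by (simp add: F_def G_def ex_def)
  qed
  obtain u :: "('n \<times> 'n) rpoly" where u: "1 = 2 * u"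
    using single_0_dvd_1[of "2::real"] by (auto elim!: dvdE)
  have "H = (2 * u) * H"
    by (simp flip: u)
  also have "\<dots> = u * (2 * H)"
    by (simp only: mult.commute[of 2 u] mult.assoc)
  also have "\<dots> = Psi * (u * (\<Sum>p\<in>UNIV. G p * G p))"
    by (simp only: two_H mult.left_commute)
  finally have "Psi dvd H" ..
  moreover have "Lop Psi = - H"
    by (simp add: Lop_def laplacian_Psi H_def F_def G_def sum.cartesian_product case_prod_beta)
  ultimately show ?thesis
    by simp
qed

section \<open>Degree in a set of variables\<close>

definition mdeg_in :: "'v set \<Rightarrow> ('v \<Rightarrow>\<^sub>0 nat) \<Rightarrow> nat" where
  "mdeg_in S m = (\<Sum>v\<in>S. Poly_Mapping.lookup m v)"

text \<open>\<open>deg_in S 0\<close> is the junk value \<open>Max {}\<close>.\<close>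

definition deg_in :: "'v set \<Rightarrow> (('v \<Rightarrow>\<^sub>0 nat) \<Rightarrow>\<^sub>0 'a::zero) \<Rightarrow> nat" where
  "deg_in S p = Max (mdeg_in S ` Poly_Mapping.keys p)"

definition component_in ::
  "'v set \<Rightarrow> nat \<Rightarrow> (('v \<Rightarrow>\<^sub>0 nat) \<Rightarrow>\<^sub>0 'a::zero) \<Rightarrow> ('v \<Rightarrow>\<^sub>0 nat) \<Rightarrow>\<^sub>0 'a" where
  "component_in S k p = Abs_poly_mapping (\<lambda>m. if mdeg_in S m = k then Poly_Mapping.lookup p m else 0)"

lemma mdeg_in_add [simp]: "mdeg_in S (a + b) = mdeg_in S a + mdeg_in S b"
  by (simp add: mdeg_in_def lookup_add sum.distrib)

lemma mdeg_in_singleton [simp]: "mdeg_in {v} m = Poly_Mapping.lookup m v"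
  by (simp add: mdeg_in_def)

lemma lookup_component_in:
  "Poly_Mapping.lookup (component_in S k p) m = (if mdeg_in S m = k then Poly_Mapping.lookup p m else 0)"
proof -
  have "{m. (if mdeg_in S m = k then Poly_Mapping.lookup p m else 0) \<noteq> 0} \<subseteq> Poly_Mapping.keys p"
    by (auto simp: in_keys_iff split: if_splits)
  then have "finite {m. (if mdeg_in S m = k then Poly_Mapping.lookup p m else 0) \<noteq> 0}"
    by (rule finite_subset) simp
  then show ?thesis
    by (simp add: component_in_def)
qed

lemma keys_component_in:
  "Poly_Mapping.keys (component_in S k p) = {m \<in> Poly_Mapping.keys p. mdeg_in S m = k}"
  by (auto simp: in_keys_iff lookup_component_in split: if_splits)

lemma component_in_add: "component_in S k (p + q) = component_in S k p + component_in S k q"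
  by (rule poly_mapping_eqI) (simp add: lookup_component_in lookup_add)

lemma component_in_eq_self:
  "(\<And>m. m \<in> Poly_Mapping.keys p \<Longrightarrow> mdeg_in S m = k) \<Longrightarrow> component_in S k p = p"
  by (rule poly_mapping_eqI) (auto simp: lookup_component_in in_keys_iff)

lemma component_in_eq_0:
  "(\<And>m. m \<in> Poly_Mapping.keys p \<Longrightarrow> mdeg_in S m \<noteq> k) \<Longrightarrow> component_in S k p = 0"
  by (rule poly_mapping_eqI) (auto simp: lookup_component_in in_keys_iff)

lemma component_in_0 [simp]: "component_in S k 0 = 0"
  by (rule component_in_eq_0) simp

lemma mdeg_in_keys_mult:
  assumes "m \<in> Poly_Mapping.keys (p * q)"
  obtains a b where "a \<in> Poly_Mapping.keys p" "b \<in> Poly_Mapping.keys q"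
    "mdeg_in S m = mdeg_in S a + mdeg_in S b"
  using keys_mult[of p q] assms by force

lemma component_in_mult_top:
  fixes p q :: "('v \<Rightarrow>\<^sub>0 nat) \<Rightarrow>\<^sub>0 'a::ring"
  assumes p: "\<And>m. m \<in> Poly_Mapping.keys p \<Longrightarrow> mdeg_in S m \<le> s"
    and q: "\<And>m. m \<in> Poly_Mapping.keys q \<Longrightarrow> mdeg_in S m \<le> t"
  shows "component_in S (s + t) (p * q) = component_in S s p * component_in S t q"
proof -
  define P where "P = component_in S s p"
  define Q where "Q = component_in S t q"
  have P: "mdeg_in S m = s" if "m \<in> Poly_Mapping.keys P" for m
    using that by (simp add: P_def keys_component_in)
  have Q: "mdeg_in S m = t" if "m \<in> Poly_Mapping.keys Q" for m
    using that by (simp add: Q_def keys_component_in)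
  have p': "mdeg_in S m < s" if "m \<in> Poly_Mapping.keys (p - P)" for m
    using that p[of m] by (force simp: P_def in_keys_iff lookup_minus lookup_component_in split: if_splits)
  have q': "mdeg_in S m < t" if "m \<in> Poly_Mapping.keys (q - Q)" for m
    using that q[of m] by (force simp: Q_def in_keys_iff lookup_minus lookup_component_in split: if_splits)
  have "p * q = P * Q + (P * (q - Q) + (p - P) * Q + (p - P) * (q - Q))"
    by (simp add: algebra_simps)
  moreover have "component_in S (s + t) (P * Q) = P * Q"
    by (rule component_in_eq_self) (metis P Q mdeg_in_keys_mult)
  moreover have "component_in S (s + t) (P * (q - Q)) = 0"
    by (rule component_in_eq_0) (metis P q' mdeg_in_keys_mult nat_add_left_cancel_less less_irrefl)
  moreover have "component_in S (s + t) ((p - P) * Q) = 0"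
    by (rule component_in_eq_0) (metis p' Q mdeg_in_keys_mult add_less_mono1 less_irrefl)
  moreover have "component_in S (s + t) ((p - P) * (q - Q)) = 0"
    by (rule component_in_eq_0) (metis p' q' mdeg_in_keys_mult add_less_mono less_irrefl)
  ultimately show ?thesis
    by (simp add: component_in_add P_def Q_def)
qed

lemma mdeg_in_le_deg_in: "m \<in> Poly_Mapping.keys p \<Longrightarrow> mdeg_in S m \<le> deg_in S p"
  unfolding deg_in_def by (rule Max_ge) auto

lemma deg_in_attained: "p \<noteq> 0 \<Longrightarrow> \<exists>m\<in>Poly_Mapping.keys p. mdeg_in S m = deg_in S p"
  unfolding deg_in_def by (metis (mono_tags, lifting) Max_in finite_imageI finite_keys
    image_iff image_is_empty keys_eq_empty)

lemma deg_in_le: "p \<noteq> 0 \<Longrightarrow> (\<And>m. m \<in> Poly_Mapping.keys p \<Longrightarrow> mdeg_in S m \<le> k) \<Longrightarrow> deg_in S p \<le> k"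
  using deg_in_attained by metis

lemma component_in_deg_in_neq_0: "p \<noteq> 0 \<Longrightarrow> component_in S (deg_in S p) p \<noteq> 0"
  using deg_in_attained[of p S] by (auto simp: keys_component_in simp flip: keys_eq_empty)

lemma component_in_deg_in_mult:
  fixes p q :: "('v \<Rightarrow>\<^sub>0 nat) \<Rightarrow>\<^sub>0 'a::ring"
  shows "component_in S (deg_in S p + deg_in S q) (p * q) =
    component_in S (deg_in S p) p * component_in S (deg_in S q) q"
  by (rule component_in_mult_top) (auto intro: mdeg_in_le_deg_in)

lemma card_keys_top_component_less:
  assumes "m1 \<in> Poly_Mapping.keys p" "m2 \<in> Poly_Mapping.keys p" "m1 \<noteq> m2"
  obtains v where
    "card (Poly_Mapping.keys (component_in {v} (deg_in {v} p) p)) < card (Poly_Mapping.keys p)"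
proof -
  obtain v where v: "Poly_Mapping.lookup m1 v \<noteq> Poly_Mapping.lookup m2 v"
    using poly_mapping_eqI[of m1 m2] assms(3) by blast
  let ?P = "component_in {v} (deg_in {v} p) p"
  have "m1 \<notin> Poly_Mapping.keys ?P \<or> m2 \<notin> Poly_Mapping.keys ?P"
    using v by (auto simp: keys_component_in)
  then have "Poly_Mapping.keys ?P \<subset> Poly_Mapping.keys p"
    using assms(1,2) by (auto simp: keys_component_in)
  then show ?thesis
    using that[of v] by (simp add: psubset_card_mono)
qed

lemma mult_neq_0_if_keys_singleton:
  fixes p q :: "('v \<Rightarrow>\<^sub>0 nat) \<Rightarrow>\<^sub>0 'a::semiring_no_zero_divisors"
  assumes "Poly_Mapping.keys p = {a}" "Poly_Mapping.keys q = {b}"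
  shows "p * q \<noteq> 0"
proof -
  have p: "p = Poly_Mapping.single a (Poly_Mapping.lookup p a)"
    by (rule poly_mapping_eqI) (use assms in \<open>auto simp: lookup_single when_def in_keys_iff\<close>)
  have q: "q = Poly_Mapping.single b (Poly_Mapping.lookup q b)"
    by (rule poly_mapping_eqI) (use assms in \<open>auto simp: lookup_single when_def in_keys_iff\<close>)
  have "a \<in> Poly_Mapping.keys p" "b \<in> Poly_Mapping.keys q"
    using assms by auto
  then have "Poly_Mapping.lookup p a * Poly_Mapping.lookup q b \<noteq> 0"
    by (simp add: in_keys_iff)
  then have "Poly_Mapping.lookup (p * q) (a + b) \<noteq> 0"
    by (subst p, subst q) (simp only: mult_single lookup_single_eq)
  then show ?thesis
    by auto
qed

text \<open>The library's \<open>idom\<close> instance for polynomials needs linearly ordered variables, which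
  \<open>'n \<times> 'n\<close> lacks. Instead: cutting down to the top component in a variable in which two
  monomials differ shrinks the support, until both factors are monomials.\<close>

lemma poly_mapping_mult_neq_0:
  fixes p q :: "('v \<Rightarrow>\<^sub>0 nat) \<Rightarrow>\<^sub>0 'a::idom"
  assumes "p \<noteq> 0" "q \<noteq> 0"
  shows "p * q \<noteq> 0"
  using assms
proof (induction "card (Poly_Mapping.keys p) + card (Poly_Mapping.keys q)" arbitrary: p q
    rule: less_induct)
  case less
  have reduce: "p' * q' \<noteq> 0"
    if nz: "p' \<noteq> 0" "q' \<noteq> 0"
      and m: "m1 \<in> Poly_Mapping.keys p'" "m2 \<in> Poly_Mapping.keys p'" "m1 \<noteq> m2"
      and card: "card (Poly_Mapping.keys p') + card (Poly_Mapping.keys q') =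
        card (Poly_Mapping.keys p) + card (Poly_Mapping.keys q)"
    for p' q' :: "('v \<Rightarrow>\<^sub>0 nat) \<Rightarrow>\<^sub>0 'a" and m1 m2
  proof -
    obtain v where v: "card (Poly_Mapping.keys (component_in {v} (deg_in {v} p') p')) <
        card (Poly_Mapping.keys p')"
      using card_keys_top_component_less[OF m] by blast
    let ?P = "component_in {v} (deg_in {v} p') p'" and ?Q = "component_in {v} (deg_in {v} q') q'"
    have "card (Poly_Mapping.keys ?Q) \<le> card (Poly_Mapping.keys q')"
      by (rule card_mono) (auto simp: keys_component_in)
    with v card have smaller: "card (Poly_Mapping.keys ?P) + card (Poly_Mapping.keys ?Q) <
        card (Poly_Mapping.keys p) + card (Poly_Mapping.keys q)"
      by linarith
    have "?P \<noteq> 0" "?Q \<noteq> 0"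
      using nz by (simp_all add: component_in_deg_in_neq_0)
    with smaller have "?P * ?Q \<noteq> 0"
      by (rule less.hyps)
    then have "component_in {v} (deg_in {v} p' + deg_in {v} q') (p' * q') \<noteq> 0"
      by (simp add: component_in_deg_in_mult)
    then show ?thesis
      by auto
  qed
  have two_keys: "\<exists>m1\<in>Poly_Mapping.keys r. \<exists>m2\<in>Poly_Mapping.keys r. m1 \<noteq> m2"
    if "r \<noteq> 0" "\<nexists>a. Poly_Mapping.keys r = {a}" for r :: "('v \<Rightarrow>\<^sub>0 nat) \<Rightarrow>\<^sub>0 'a"
    using that by (metis empty_iff insertI1 keys_eq_empty subsetI subset_singletonD)
  consider "\<nexists>a. Poly_Mapping.keys p = {a}" | "\<nexists>b. Poly_Mapping.keys q = {b}"
    | a b where "Poly_Mapping.keys p = {a}" "Poly_Mapping.keys q = {b}"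
    by blast
  then show ?case
  proof cases
    case 1
    then show ?thesis
      using two_keys[of p] reduce[of p q] less.prems by blast
  next
    case 2
    then obtain m1 m2 where "m1 \<in> Poly_Mapping.keys q" "m2 \<in> Poly_Mapping.keys q" "m1 \<noteq> m2"
      using two_keys[of q] less.prems by blast
    then have "q * p \<noteq> 0"
      using reduce[of q p] less.prems by (simp add: add.commute)
    then show ?thesis
      by (simp add: mult.commute)
  next
    case 3
    then show ?thesis
      by (rule mult_neq_0_if_keys_singleton)
  qed
qed

lemma deg_in_mult:
  fixes p q :: "('v \<Rightarrow>\<^sub>0 nat) \<Rightarrow>\<^sub>0 'a::idom"
  assumes "p \<noteq> 0" "q \<noteq> 0"
  shows "deg_in S (p * q) = deg_in S p + deg_in S q"
proof (rule antisym)
  show "deg_in S (p * q) \<le> deg_in S p + deg_in S q"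
    using poly_mapping_mult_neq_0[OF assms]
    by (rule deg_in_le) (metis mdeg_in_keys_mult mdeg_in_le_deg_in add_mono)
  have "component_in S (deg_in S p + deg_in S q) (p * q) \<noteq> 0"
    using assms by (simp add: component_in_deg_in_mult poly_mapping_mult_neq_0 component_in_deg_in_neq_0)
  then obtain m where "m \<in> Poly_Mapping.keys (p * q)" "mdeg_in S m = deg_in S p + deg_in S q"
    by (metis component_in_eq_0)
  then show "deg_in S p + deg_in S q \<le> deg_in S (p * q)"
    by (metis mdeg_in_le_deg_in)
qed

lemma deg_in_mono:
  assumes "finite T" "S \<subseteq> T"
  shows "deg_in S p \<le> deg_in T p"
proof (cases "p = 0")
  case False
  then obtain m where "m \<in> Poly_Mapping.keys p" "mdeg_in S m = deg_in S p"
    using deg_in_attained by blast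
  moreover have "mdeg_in S m \<le> mdeg_in T m"
    unfolding mdeg_in_def using assms by (rule sum_mono2) simp
  ultimately show ?thesis
    using mdeg_in_le_deg_in[of m p T] by linarith
qed (simp add: deg_in_def)

lemma deg_in_1 [simp]: "deg_in S 1 = 0"
  by (simp add: deg_in_def mdeg_in_def flip: single_one)

lemma deg_in_dvd_1:
  fixes p :: "('v \<Rightarrow>\<^sub>0 nat) \<Rightarrow>\<^sub>0 'a::idom"
  assumes "p dvd 1"
  shows "deg_in S p = 0"
proof -
  obtain k where k: "1 = p * k"
    using assms by (rule dvdE)
  then have "p \<noteq> 0" "k \<noteq> 0"
    by auto
  then have "deg_in S p + deg_in S k = deg_in S (p * k)"
    by (simp add: deg_in_mult)
  also have "\<dots> = 0"
    by (simp flip: k)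
  finally show ?thesis
    by simp
qed

lemma deg_in_factor_eq_0:
  fixes f g :: "('v \<Rightarrow>\<^sub>0 nat) \<Rightarrow>\<^sub>0 'a::idom"
  assumes "f * g \<noteq> 0" "finite T" "deg_in T (f * g) \<le> 1"
    and "v \<in> T" "w \<in> T" "0 < deg_in {v} f"
  shows "deg_in {w} g = 0"
proof -
  have "f \<noteq> 0" "g \<noteq> 0"
    using assms(1) by auto
  then have "deg_in T f + deg_in T g \<le> 1"
    using assms(3) by (simp add: deg_in_mult)
  moreover have "deg_in {v} f \<le> deg_in T f" "deg_in {w} g \<le> deg_in T g"
    using assms(2,4,5) by (simp_all add: deg_in_mono)
  ultimately show ?thesis
    using assms(6) by linarith
qed

lemma dvd_1_if_deg_in_eq_0:
  fixes p :: "('v \<Rightarrow>\<^sub>0 nat) \<Rightarrow>\<^sub>0 'a::field"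
  assumes "p \<noteq> 0" "\<And>v. deg_in {v} p = 0"
  shows "p dvd 1"
proof -
  have "Poly_Mapping.keys p \<subseteq> {0}"
  proof
    fix m
    assume "m \<in> Poly_Mapping.keys p"
    then have "Poly_Mapping.lookup m v = 0" for v
      using mdeg_in_le_deg_in[of m p "{v}"] assms(2)[of v] by simp
    then show "m \<in> {0}"
      by (simp add: poly_mapping_eqI)
  qed
  then have "p = Poly_Mapping.single 0 (Poly_Mapping.lookup p 0)" "Poly_Mapping.lookup p 0 \<noteq> 0"
    using assms(1) by (auto intro!: poly_mapping_eqI simp: lookup_single when_def in_keys_iff)
  then show ?thesis
    by (metis single_0_dvd_1)
qed

definition perm_monomial :: "('n::finite \<Rightarrow> 'n) \<Rightarrow> ('n \<times> 'n) \<Rightarrow>\<^sub>0 nat" where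
  "perm_monomial \<sigma> = (\<Sum>i\<in>UNIV. Poly_Mapping.single (i, \<sigma> i) 1)"

lemma lookup_perm_monomial:
  "Poly_Mapping.lookup (perm_monomial \<sigma>) v = (if \<sigma> (fst v) = snd v then 1 else 0)"
proof -
  have "Poly_Mapping.lookup (perm_monomial \<sigma>) v =
      (\<Sum>i\<in>UNIV. if i = fst v then (if \<sigma> (fst v) = snd v then 1 else 0) else 0)"
    unfolding perm_monomial_def lookup_sum lookup_single by (intro sum.cong refl) (auto simp: when_def)
  then show ?thesis
    by simp
qed

lemma inj_perm_monomial: "inj (perm_monomial :: ('n::finite \<Rightarrow> 'n) \<Rightarrow> _)"
proof (rule injI, rule ext)
  fix \<sigma> \<tau> :: "'n \<Rightarrow> 'n" and i
  assume "perm_monomial \<sigma> = perm_monomial \<tau>"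
  then have "Poly_Mapping.lookup (perm_monomial \<sigma>) (i, \<sigma> i) =
      Poly_Mapping.lookup (perm_monomial \<tau>) (i, \<sigma> i)"
    by simp
  then show "\<sigma> i = \<tau> i"
    by (simp add: lookup_perm_monomial split: if_splits)
qed

lemma Psi_eq_sum_perm_monomial:
  "(Psi :: ('n::finite \<times> 'n) rpoly) =
    (\<Sum>\<sigma>\<in>{\<sigma>. \<sigma> permutes (UNIV :: 'n set)}. Poly_Mapping.single (perm_monomial \<sigma>) (of_int (sign \<sigma>)))"
  unfolding Psi_def det_def
proof (intro sum.cong refl)
  fix \<sigma> :: "'n \<Rightarrow> 'n"
  have "(\<Prod>i\<in>A. Var (i, \<sigma> i)) = Poly_Mapping.single (\<Sum>i\<in>A. Poly_Mapping.single (i, \<sigma> i) 1) 1" for A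
    by (induction A rule: infinite_finite_induct) (auto simp: Var_def mult_single)
  then show "of_int (sign \<sigma>) * (\<Prod>i\<in>UNIV. ((\<chi> i j. Var (i, j)) :: (('n \<times> 'n) rpoly)^'n^'n) $ i $ \<sigma> i) =
      Poly_Mapping.single (perm_monomial \<sigma>) (of_int (sign \<sigma>))"
    by (simp add: perm_monomial_def mult_single flip: single_of_int)
qed

lemma lookup_Psi_perm_monomial:
  assumes "\<sigma> permutes (UNIV :: 'n::finite set)"
  shows "Poly_Mapping.lookup (Psi :: ('n \<times> 'n) rpoly) (perm_monomial \<sigma>) = of_int (sign \<sigma>)"
proof -
  have "Poly_Mapping.lookup (Psi :: ('n \<times> 'n) rpoly) (perm_monomial \<sigma>) =
      (\<Sum>\<tau>\<in>{\<tau>. \<tau> permutes (UNIV :: 'n set)}. if \<tau> = \<sigma> then of_int (sign \<sigma>) else 0)"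
    unfolding Psi_eq_sum_perm_monomial lookup_sum lookup_single
    by (intro sum.cong refl) (auto simp: when_def dest: injD[OF inj_perm_monomial])
  then show ?thesis
    using assms by simp
qed

lemma keys_Psi:
  "Poly_Mapping.keys (Psi :: ('n::finite \<times> 'n) rpoly) = perm_monomial ` {\<sigma>. \<sigma> permutes UNIV}"
proof
  show "Poly_Mapping.keys (Psi :: ('n \<times> 'n) rpoly) \<subseteq> perm_monomial ` {\<sigma>. \<sigma> permutes UNIV}"
    unfolding Psi_eq_sum_perm_monomial using keys_sum by (fastforce split: if_splits)
  show "perm_monomial ` {\<sigma>. \<sigma> permutes UNIV} \<subseteq> Poly_Mapping.keys (Psi :: ('n \<times> 'n) rpoly)"
    by (auto simp: in_keys_iff lookup_Psi_perm_monomial sign_nz)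
qed

lemma Psi_neq_0: "(Psi :: ('n::finite \<times> 'n) rpoly) \<noteq> 0"
proof -
  have "perm_monomial id \<in> Poly_Mapping.keys (Psi :: ('n \<times> 'n) rpoly)"
    unfolding keys_Psi by (auto intro: permutes_id)
  then show ?thesis
    by auto
qed

lemma mdeg_in_perm_monomial: "mdeg_in S (perm_monomial \<sigma>) = card {v \<in> S. \<sigma> (fst v) = snd v}"
  by (simp add: mdeg_in_def lookup_perm_monomial flip: sum.inter_filter)

lemma homogeneous_Psi: "homogeneous_of_degree CARD('n) (Psi :: ('n::finite \<times> 'n) rpoly)"
proof -
  have "mdeg (perm_monomial \<sigma>) = CARD('n)" for \<sigma> :: "'n \<Rightarrow> 'n"
  proof -
    have "bij_betw (\<lambda>i. (i, \<sigma> i)) UNIV {v. \<sigma> (fst v) = snd v}"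
      by (rule bij_betwI[where g = fst]) auto
    then show ?thesis
      using mdeg_in_perm_monomial[of UNIV \<sigma>] by (simp add: mdeg_def mdeg_in_def bij_betw_same_card)
  qed
  then show ?thesis
    unfolding homogeneous_of_degree_def using Psi_neq_0 by (auto simp: keys_Psi)
qed

section \<open>Irreducibility of \<open>\<Psi>\<close>\<close>

lemma deg_in_Psi_le_1:
  assumes "\<And>\<sigma> v w. \<sigma> permutes UNIV \<Longrightarrow> v \<in> S \<Longrightarrow> w \<in> S \<Longrightarrow>
      \<sigma> (fst v) = snd v \<Longrightarrow> \<sigma> (fst w) = snd w \<Longrightarrow> v = w"
  shows "deg_in S (Psi :: ('n::finite \<times> 'n) rpoly) \<le> 1"
proof (rule deg_in_le[OF Psi_neq_0])
  fix m
  assume "m \<in> Poly_Mapping.keys (Psi :: ('n \<times> 'n) rpoly)"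
  then obtain \<sigma> where "\<sigma> permutes UNIV" "m = perm_monomial \<sigma>"
    by (auto simp: keys_Psi)
  then show "mdeg_in S m \<le> 1"
    using assms by (auto simp: mdeg_in_perm_monomial card_le_Suc0_iff_eq)
qed

lemma deg_in_Psi_Var: "deg_in {v} (Psi :: ('n::finite \<times> 'n) rpoly) = 1"
proof (rule antisym)
  show "deg_in {v} (Psi :: ('n \<times> 'n) rpoly) \<le> 1"
    by (rule deg_in_Psi_le_1) simp
  obtain i j where v: "v = (i, j)"
    by fastforce
  have "perm_monomial (Transposition.transpose i j) \<in> Poly_Mapping.keys (Psi :: ('n \<times> 'n) rpoly)"
    unfolding keys_Psi by (auto intro: permutes_swap_id)
  from mdeg_in_le_deg_in[OF this, of "{v}"]
  show "1 \<le> deg_in {v} (Psi :: ('n \<times> 'n) rpoly)"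
    by (simp add: v lookup_perm_monomial)
qed

lemma deg_in_Psi_row: "deg_in ({i} \<times> UNIV) (Psi :: ('n::finite \<times> 'n) rpoly) \<le> 1"
  by (rule deg_in_Psi_le_1) (auto simp: prod_eq_iff)

lemma deg_in_Psi_column: "deg_in (UNIV \<times> {j}) (Psi :: ('n::finite \<times> 'n) rpoly) \<le> 1"
proof (rule deg_in_Psi_le_1)
  fix \<sigma> v w
  assume \<sigma>: "\<sigma> permutes UNIV" and "v \<in> UNIV \<times> {j}" "w \<in> UNIV \<times> {j}"
    "\<sigma> (fst v) = snd v" "\<sigma> (fst w) = snd w"
  then have "snd v = snd w" "\<sigma> (fst v) = \<sigma> (fst w)"
    by auto
  then show "v = w"
    using injD[OF permutes_inj[OF \<sigma>]] by (simp add: prod_eq_iff)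
qed

lemma deg_in_Psi_factors:
  assumes "Psi = f * g"
  shows "deg_in {v} f + deg_in {v} g = 1"
  using assms deg_in_mult[of f g "{v}"] deg_in_Psi_Var[of v] Psi_neq_0 by fastforce

text \<open>A factor containing \<open>x\<^sub>i\<^sub>j\<close> contains the whole row \<open>i\<close>, hence every column.\<close>

lemma Psi_factor_dvd_1:
  assumes fg: "Psi = f * g" and "0 < deg_in {(i, j)} f"
  shows "g dvd 1"
proof -
  have nz: "f * g \<noteq> 0"
    using fg Psi_neq_0 by simp
  have row: "0 < deg_in {(i, l)} f" for l
    using deg_in_factor_eq_0[OF nz _ _ _ _ assms(2), of "{i} \<times> UNIV" "(i, l)"]
      deg_in_Psi_row[of i] deg_in_Psi_factors[OF fg, of "(i, l)"] fg by simp
  have "deg_in {(k, l)} g = 0" for k l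
    using deg_in_factor_eq_0[OF nz _ _ _ _ row[of l], of "UNIV \<times> {l}" "(k, l)"]
      deg_in_Psi_column[of l] fg by simp
  moreover have "g \<noteq> 0"
    using nz by auto
  ultimately show ?thesis
    by (metis dvd_1_if_deg_in_eq_0 surj_pair)
qed

lemma irreducible_Psi: "irreducible (Psi :: ('n::finite \<times> 'n) rpoly)"
proof (rule irreducibleI)
  show "(Psi :: ('n \<times> 'n) rpoly) \<noteq> 0"
    by (rule Psi_neq_0)
  show "\<not> (Psi :: ('n \<times> 'n) rpoly) dvd 1"
    by (metis deg_in_dvd_1 deg_in_Psi_Var zero_neq_one)
  fix f g :: "('n \<times> 'n) rpoly"
  assume fg: "Psi = f * g"
  then have "0 < deg_in {(i, j)} f \<or> 0 < deg_in {(i, j)} g" for i j :: 'n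
    using deg_in_Psi_factors[OF fg, of "(i, j)"] by linarith
  moreover have "Psi = g * f"
    using fg by (simp add: mult.commute)
  ultimately show "f dvd 1 \<or> g dvd 1"
    using Psi_factor_dvd_1 fg by metis
qed

theorem theorem3:
  shows "irreducible (Psi :: ('n::finite \<times> 'n) rpoly)
         \<and> homogeneous_of_degree CARD('n) (Psi :: ('n \<times> 'n) rpoly)
         \<and> (Psi :: ('n \<times> 'n) rpoly) dvd Lop Psi"
  using irreducible_Psi homogeneous_Psi Psi_dvd_Lop_Psi by blast

end
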